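(* Let $a,b\geq0$, $0\leq j\leq b$ and $n\geq b+1$ be integers. Then $\{H_{a+1+j}E_{b-j}\}_n$ equals the number of pairs $(\lambda,\mu)$ such that (1) $\lambda=(\lambda_1,\dotsc,\lambda_{b-j})$ with $\lambda_1\geq\cdots\geq\lambda_{b-j}\geq0$; (2) $\mu=(\mu_1,\dotsc,\mu_{n-b+j})$ with $\mu_1>\cdots>\mu_{n-b+j}\geq0$; (3) $\sum_i\lambda_i+\sum_i\mu_i=a+1+j$.
   Context: For $i\geq1$, $X_i(\sigma)$ is the number of $i$-cycles of $\sigma$. For a partition $\alpha=1^{a_1}2^{a_2}\cdots$ ($a_i$ = number of parts equal to $i$, $|\alpha|=\sum ia_i$, $l(\alpha)=\sum a_i$) let $\binom X\alpha=\prod_i\binom{X_i}{a_i}$ and $\left(\!\binom X\alpha\!\right)=\prod_i\binom{X_i+a_i-1}{a_i}$. Define $H_k=\sum_{\alpha\vdash k}\left(\!\binom X\alpha\!\right)$ and $E_l=\sum_{\alpha\vdash l}(-1)^{|\alpha|-l(\alpha)}\binom X\alpha$ ($H_0=E_0=1$). The signed moment of $p\in\mathbb C[X_1,X_2,\dotsc]$ is $\{p\}_n=\frac1{n!}\sum_{\sigma\in S_n}\mathrm{sgn}(\sigma)p(X_1(\sigma),X_2(\sigma),\dotsc)$. *)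

theory Defs
  imports "HOL-Combinatorics.Permutations" Complex_Main
begin

definition perm_orbit :: "(nat \<Rightarrow> nat) \<Rightarrow> nat \<Rightarrow> nat set" where
  "perm_orbit \<sigma> x = {(\<sigma> ^^ k) x | k. True}"

definition cyc_count :: "nat \<Rightarrow> (nat \<Rightarrow> nat) \<Rightarrow> nat \<Rightarrow> nat" where
  "cyc_count n \<sigma> i = card {C. \<exists>x\<in>{1..n}. C = perm_orbit \<sigma> x \<and> card C = i}"

text \<open>Partitions of k, encoded by multiplicity functions a (a i = number of parts equal to i).\<close>
definition partitions_mult :: "nat \<Rightarrow> (nat \<Rightarrow> nat) set" where
  "partitions_mult k = {a. (\<forall>i. (i = 0 \<or> k < i) \<longrightarrow> a i = 0) \<and> (\<Sum>i=1..k. i * a i) = k}"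

definition part_length :: "nat \<Rightarrow> (nat \<Rightarrow> nat) \<Rightarrow> nat" where
  "part_length k a = (\<Sum>i=1..k. a i)"

text \<open>H_k and E_l as functions of the cycle counts X :: nat => nat (X i = X_i).\<close>
definition H_poly :: "nat \<Rightarrow> (nat \<Rightarrow> nat) \<Rightarrow> real" where
  "H_poly k X = (\<Sum>a\<in>partitions_mult k. real (\<Prod>i=1..k. (X i + a i - 1) choose (a i)))"

definition E_poly :: "nat \<Rightarrow> (nat \<Rightarrow> nat) \<Rightarrow> real" where
  "E_poly l X = (\<Sum>a\<in>partitions_mult l.
      (-1) ^ (l - part_length l a) * real (\<Prod>i=1..l. (X i) choose (a i)))"

definition signed_moment :: "((nat \<Rightarrow> nat) \<Rightarrow> real) \<Rightarrow> nat \<Rightarrow> real" where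
  "signed_moment p n = (1 / fact n) *
     (\<Sum>\<sigma>\<in>{\<sigma>. \<sigma> permutes {1..n}}. real_of_int (sign \<sigma>) * p (cyc_count n \<sigma>))"

end

theory Submission
  imports Defs "HOL-Combinatorics.Orbits" "HOL-Combinatorics.Cycles"
begin

text \<open>
  Fix \<open>\<sigma> \<in> S\<^sub>n\<close> and evaluate at its cycle counts. Then \<open>H\<^sub>k\<close> counts the functions \<open>h\<^sub>1\<close> from
  the cycles of \<open>\<sigma>\<close> to \<open>\<nat>\<close> with \<open>\<Sum> |c| h\<^sub>1(c) = k\<close>, and \<open>E\<^sub>l\<close> is the sum over the
  \<open>0/1\<close>-valued \<open>h\<^sub>2\<close> with \<open>\<Sum> |c| h\<^sub>2(c) = l\<close> of \<open>(-1)\<^bsup>l - \<Sum> h\<^sub>2(c)\<^esup>\<close>. Spreading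
  \<open>(h\<^sub>1, h\<^sub>2)\<close> over the points of each cycle gives exactly the \<open>\<sigma>\<close>-invariant fillings
  \<open>g : [n] \<rightarrow> \<nat> \<times> {0,1}\<close> (value, colour) with value sum \<open>k\<close> and \<open>l\<close> points of colour 1,
  and \<open>sgn \<sigma> \<cdot> (-1)\<^bsup>l - \<Sum> h\<^sub>2(c)\<^esup>\<close> is the sign of \<open>\<sigma>\<close> restricted to the colour-0 points.

  Summing over \<open>\<sigma>\<close> first, for a fixed filling \<open>g\<close> the sum over its stabilizer vanishes by a
  transposition involution unless \<open>g\<close> is injective on the colour-0 points, in which case
  every term is \<open>1\<close>. By orbit-stabilizer the result is \<open>n!\<close> times the number of
  \<open>S\<^sub>n\<close>-orbits of such fillings, that is, of their multisets of values, and these correspond to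
  the pairs \<open>(\<lambda>, \<mu>)\<close>: \<open>\<lambda>\<close> lists the values of colour 1 and \<open>\<mu>\<close> the (distinct) values of
  colour 0, both in decreasing order.
\<close>

section \<open>The sign of a permutation and its cycles\<close>

lemma sign_cycle_of_list:
  "distinct cs \<Longrightarrow> sign (cycle_of_list cs) = (-1) ^ (length cs - 1)"
proof (induction cs rule: cycle_of_list.induct)
  case (1 i j cs)
  have "sign (cycle_of_list (i # j # cs)) = sign (transpose i j) * sign (cycle_of_list (j # cs))"
    by (simp add: sign_compose permutation_swap_id permutation_of_cycle)
  also have "\<dots> = (-1) ^ (length (i # j # cs) - 1)"
    using 1 by (simp add: sign_swap_id)
  finally show ?case by (simp del: cycle_of_list.simps)
qed simp_all

lemma perm_restrict_orbit_eq_cycle_of_list: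
  assumes "permutation p"
  shows "perm_restrict p (orbit p a) = cycle_of_list (support p a)"
proof
  fix b
  have "set (support p a) = orbit p a"
    using support_set[OF assms] orbit_altdef_permutation[OF assms] by auto
  then show "perm_restrict p (orbit p a) b = cycle_of_list (support p a) b"
    using cycle_restrict[OF assms, of b a] id_outside_supp[of b "support p a"]
    by (cases "b \<in> orbit p a") (simp_all add: perm_restrict_simps)
qed

lemma sign_perm_restrict_orbit:
  assumes "permutation p"
  shows "sign (perm_restrict p (orbit p a)) = (-1) ^ (card (orbit p a) - 1)"
proof -
  have "set (support p a) = orbit p a"
    using support_set[OF assms] orbit_altdef_permutation[OF assms] by auto
  moreover have "distinct (support p a)"
    using cycle_of_permutation[OF assms] .
  ultimately show ?thesis
    using perm_restrict_orbit_eq_cycle_of_list[OF assms] sign_cycle_of_list distinct_card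
    by metis
qed

lemma orbit_perm_restrict:
  assumes "\<And>y. y \<in> F \<Longrightarrow> p y \<in> F" "x \<in> F"
  shows "orbit (perm_restrict p F) x = orbit p x"
  by (rule orbit_cong0[OF assms(2), symmetric]) (auto simp: perm_restrict_simps assms(1))

lemma orbit_eq_of_mem_orbit:
  "permutation p \<Longrightarrow> y \<in> orbit p x \<Longrightarrow> orbit p y = orbit p x"
  by (rule orbit_cyclic_eq3[OF cyclic_on_orbit'])

lemma orbits_insert_orbit:
  assumes "p permutes T" "finite T" "a \<in> T"
  shows "orbit p ` T = insert (orbit p a) (orbit p ` (T - orbit p a))"
    and "orbit p a \<notin> orbit p ` (T - orbit p a)"
proof -
  have perm: "permutation p" using assms permutation_permutes by blast
  have "orbit p ` orbit p a = {orbit p a}"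
    using permutation_self_in_orbit[OF perm] orbit_eq_of_mem_orbit[OF perm] by blast
  moreover have "T = orbit p a \<union> (T - orbit p a)"
    using permutes_orbit_subset[OF assms(1,3)] by blast
  ultimately show "orbit p ` T = insert (orbit p a) (orbit p ` (T - orbit p a))"
    by (metis image_Un insert_is_Un)
  show "orbit p a \<notin> orbit p ` (T - orbit p a)"
    using permutation_self_in_orbit[OF perm] by fastforce
qed

lemma perm_restrict_remove_orbit:
  assumes "finite T" "\<sigma> permutes T" "a \<in> T"
  defines "\<sigma>' \<equiv> perm_restrict \<sigma> (T - orbit \<sigma> a)"
  shows "\<sigma>' permutes (T - orbit \<sigma> a)"
    and "orbit \<sigma>' ` (T - orbit \<sigma> a) = orbit \<sigma> ` (T - orbit \<sigma> a)"
    and "sign \<sigma> = sign \<sigma>' * (-1) ^ (card (orbit \<sigma> a) - 1)"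
proof -
  let ?c = "orbit \<sigma> a"
  have perm: "permutation \<sigma>"
    using assms permutation_permutes by blast
  have cyc: "cyclic_on \<sigma> ?c"
    using cyclic_on_orbit[OF assms(2,1)] .
  show \<sigma>': "\<sigma>' permutes (T - ?c)"
    unfolding \<sigma>'_def using perm_restrict_diff_cyclic[OF assms(2) cyc] .
  have "\<sigma>' \<circ> perm_restrict \<sigma> ?c = perm_restrict \<sigma> ((T - ?c) \<union> ?c)"
    unfolding \<sigma>'_def by (rule perm_restrict_comp) (auto simp: cyc)
  also have "(T - ?c) \<union> ?c = T"
    using permutes_orbit_subset[OF assms(2,3)] by blast
  finally have decomp: "\<sigma> = \<sigma>' \<circ> perm_restrict \<sigma> ?c"
    using assms(2) by (simp add: o_def)
  have "permutation \<sigma>'"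
    using \<sigma>' assms(1) permutation_permutes by blast
  moreover have "permutation (perm_restrict \<sigma> ?c)"
    unfolding perm_restrict_orbit_eq_cycle_of_list[OF perm] by (rule permutation_of_cycle)
  ultimately show "sign \<sigma> = sign \<sigma>' * (-1) ^ (card ?c - 1)"
    by (subst decomp) (simp add: sign_compose sign_perm_restrict_orbit[OF perm])
  have "\<sigma> y \<in> T - ?c" if "y \<in> T - ?c" for y
    using that permutes_in_image[OF assms(2)] cyclic_on_f_in[OF assms(2) cyc] by blast
  then show "orbit \<sigma>' ` (T - ?c) = orbit \<sigma> ` (T - ?c)"
    unfolding \<sigma>'_def using orbit_perm_restrict[of "T - ?c" \<sigma>] by (intro image_cong) auto
qed

lemma sign_eq_power_orbits:
  assumes "finite T" "\<sigma> permutes T"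
  shows "sign \<sigma> = (-1) ^ (\<Sum>c\<in>orbit \<sigma> ` T. card c - 1)"
  using assms
proof (induction "card T" arbitrary: T \<sigma> rule: less_induct)
  case less
  show ?case
  proof (cases "T = {}")
    case True
    then show ?thesis using less.prems permutes_empty by auto
  next
    case False
    then obtain a where a: "a \<in> T" by auto
    let ?c = "orbit \<sigma> a" and ?\<sigma>' = "perm_restrict \<sigma> (T - orbit \<sigma> a)"
    note split = perm_restrict_remove_orbit[OF less.prems a]
    have "permutation \<sigma>"
      using less.prems permutation_permutes by blast
    then have "a \<in> ?c"
      by (rule permutation_self_in_orbit)
    then have "card (T - ?c) < card T"
      using less.prems(1) a by (intro psubset_card_mono) auto
    then have "sign ?\<sigma>' = (-1) ^ (\<Sum>d\<in>orbit \<sigma> ` (T - ?c). card d - 1)"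
      using less.hyps[OF _ _ split(1)] split(2) less.prems(1) by simp
    then have "sign \<sigma> = (-1) ^ (\<Sum>d\<in>orbit \<sigma> ` (T - ?c). card d - 1) * (-1) ^ (card ?c - 1)"
      using split(3) by simp
    also have "\<dots> = (-1) ^ (\<Sum>d\<in>orbit \<sigma> ` T. card d - 1)"
      using orbits_insert_orbit[OF less.prems(2,1) a] less.prems(1)
      by (simp add: power_add mult.commute)
    finally show ?thesis .
  qed
qed

section \<open>Functions with a prescribed weighted sum\<close>

lemma card_nat_funs_with_sum:
  assumes "finite B"
  shows "card {h \<in> B \<rightarrow>\<^sub>E (UNIV::nat set). sum h B = m} = (card B + m - 1) choose m"
proof -
  let ?F = "{h \<in> B \<rightarrow>\<^sub>E (UNIV::nat set). sum h B = m}"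
  have "bij_betw (\<lambda>M. restrict (count M) B) (multisets_of_size B m) ?F"
  proof (rule bij_betw_byWitness[where f' = "\<lambda>h. \<Sum>c\<in>B. replicate_mset (h c) c"])
    have count_sum_replicate: "count (\<Sum>c\<in>B. replicate_mset (h c) c) x = (if x \<in> B then h x else 0)"
      for h :: "'a \<Rightarrow> nat" and x
      using assms by (simp add: count_sum sum.delta)
    show "\<forall>M\<in>multisets_of_size B m. (\<Sum>c\<in>B. replicate_mset (restrict (count M) B c) c) = M"
      by (auto intro!: multiset_eqI simp: count_sum_replicate multisets_of_size_def not_in_iff)
    show "\<forall>h\<in>?F. restrict (count (\<Sum>c\<in>B. replicate_mset (h c) c)) B = h"
      by (auto simp: count_sum_replicate fun_eq_iff PiE_def extensional_def)
    have "sum (count M) B = m" if M: "M \<in> multisets_of_size B m" for M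
    proof -
      have "sum (count M) B = sum (count M) (set_mset M)"
        using M assms by (intro sum.mono_neutral_right) (auto simp: multisets_of_size_def not_in_iff)
      then show ?thesis
        using M by (simp add: multisets_of_size_def size_multiset_overloaded_eq)
    qed
    then show "(\<lambda>M. restrict (count M) B) ` multisets_of_size B m \<subseteq> ?F"
      by auto
    have "x \<in> B" if "x \<in># (\<Sum>c\<in>B. replicate_mset (h c) c)" for h x
      using that count_sum_replicate[of h x] by (metis count_eq_zero_iff)
    then show "(\<lambda>h. \<Sum>c\<in>B. replicate_mset (h c) c) ` ?F \<subseteq> multisets_of_size B m"
      unfolding multisets_of_size_def by auto
  qed
  then show ?thesis
    using bij_betw_same_card card_multisets_of_size[OF assms] by fastforce
qed

lemma card_01_funs_with_sum:
  assumes "finite B"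
  shows "card {h \<in> B \<rightarrow>\<^sub>E {0::nat, 1}. sum h B = m} = card B choose m"
proof -
  let ?F = "{h \<in> B \<rightarrow>\<^sub>E {0::nat, 1}. sum h B = m}"
  have sum_indicator: "(\<Sum>c\<in>B. if c \<in> S then 1 else 0) = card (B \<inter> S)" for S
    using assms by (simp add: sum.If_cases)
  have "bij_betw (\<lambda>S. \<lambda>c\<in>B. if c \<in> S then 1 else 0) {S. S \<subseteq> B \<and> card S = m} ?F"
  proof (rule bij_betw_byWitness[where f' = "\<lambda>h. {c\<in>B. h c = 1}"])
    show "\<forall>S\<in>{S. S \<subseteq> B \<and> card S = m}. {c \<in> B. (\<lambda>c\<in>B. if c \<in> S then 1 else 0) c = (1::nat)} = S"
      by auto
    show "\<forall>h\<in>?F. (\<lambda>c\<in>B. if c \<in> {c \<in> B. h c = 1} then 1 else 0) = h"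
      by (auto simp: fun_eq_iff PiE_def extensional_def Pi_def)
    show "(\<lambda>S. \<lambda>c\<in>B. if c \<in> S then 1 else 0) ` {S. S \<subseteq> B \<and> card S = m} \<subseteq> ?F"
      using sum_indicator by (auto simp: Int_absorb1 split: if_splits)
    have "sum h B = card {c\<in>B. h c = 1}" if "h \<in> B \<rightarrow>\<^sub>E {0, 1}" for h :: "'a \<Rightarrow> nat"
    proof -
      have "sum h B = (\<Sum>c\<in>B. if c \<in> {c\<in>B. h c = 1} then 1 else 0)"
        using that by (intro sum.cong) (auto simp: PiE_def Pi_def)
      then show ?thesis
        using sum_indicator[of "{c\<in>B. h c = 1}"] by (simp add: Int_absorb1)
    qed
    then show "(\<lambda>h. {c\<in>B. h c = 1}) ` ?F \<subseteq> {S. S \<subseteq> B \<and> card S = m}"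
      by auto
  qed
  then show ?thesis
    using bij_betw_same_card n_subsets[OF assms] by fastforce
qed

lemma partitions_mult_eq_0:
  assumes "a \<in> partitions_mult k" "i \<notin> {1..k}"
  shows "a i = 0"
proof -
  have "i = 0 \<or> k < i \<longrightarrow> a i = 0"
    using assms(1) by (simp add: partitions_mult_def)
  moreover have "i = 0 \<or> k < i"
    using assms(2) by auto
  ultimately show ?thesis
    by (rule mp)
qed

lemma partitions_mult_le:
  assumes "a \<in> partitions_mult k"
  shows "a i \<le> k"
proof (cases "i \<in> {1..k}")
  case True
  have "a i \<le> i * a i" using True by simp
  also have "\<dots> \<le> (\<Sum>i=1..k. i * a i)" by (rule member_le_sum) (use True in auto)
  finally show ?thesis using assms by (simp add: partitions_mult_def)
qed (simp add: partitions_mult_eq_0[OF assms])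

lemma finite_partitions_mult: "finite (partitions_mult k)"
proof -
  have "partitions_mult k \<subseteq>
      {a. \<forall>i. (i \<in> {1..k} \<longrightarrow> a i \<in> {0..k}) \<and> (i \<notin> {1..k} \<longrightarrow> a i = 0)}"
  proof (intro subsetI CollectI allI conjI impI)
    fix a i assume "a \<in> partitions_mult k"
    then show "a i \<in> {0..k}" and "i \<notin> {1..k} \<Longrightarrow> a i = 0"
      using partitions_mult_le partitions_mult_eq_0 by auto
  qed
  then show ?thesis
    using finite_set_of_finite_funs[of "{1..k}" "{0..k}" 0] finite_subset by blast
qed

definition weighted_funs :: "'a set \<Rightarrow> ('a \<Rightarrow> nat) \<Rightarrow> nat set \<Rightarrow> nat \<Rightarrow> ('a \<Rightarrow> nat) set" where
  "weighted_funs D w V k = {h \<in> D \<rightarrow>\<^sub>E V. (\<Sum>c\<in>D. w c * h c) = k}"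

text \<open>Read \<open>h \<in> weighted_funs D w V k\<close> as the partition of \<open>k\<close> having \<open>h c\<close> parts
  \<open>w c\<close> for each \<open>c \<in> D\<close>; its profile is this partition in multiplicity notation.\<close>
definition weight_profile :: "'a set \<Rightarrow> ('a \<Rightarrow> nat) \<Rightarrow> nat \<Rightarrow> ('a \<Rightarrow> nat) \<Rightarrow> nat \<Rightarrow> nat" where
  "weight_profile D w k h i = (if i \<in> {1..k} then \<Sum>c\<in>{c\<in>D. w c = i}. h c else 0)"

text \<open>Points of weight above \<open>k\<close> get \<open>0\<close>: functions in \<open>weighted_funs D w V k\<close> vanish there.\<close>
definition glue_by_weight :: "'a set \<Rightarrow> ('a \<Rightarrow> nat) \<Rightarrow> nat \<Rightarrow> (nat \<Rightarrow> 'a \<Rightarrow> nat) \<Rightarrow> 'a \<Rightarrow> nat" where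
  "glue_by_weight D w k F = (\<lambda>c\<in>D. if w c \<le> k then F (w c) c else 0)"

lemma weight_profile_eq_0: "i \<notin> {1..k} \<Longrightarrow> weight_profile D w k h i = 0"
  unfolding weight_profile_def by (rule if_not_P)

context
  fixes D :: "'a set" and w :: "'a \<Rightarrow> nat"
  assumes finite_D: "finite D" and weight_pos: "\<forall>c\<in>D. 1 \<le> w c"
begin

lemma sum_split_by_weight:
  fixes f :: "'a \<Rightarrow> 'b::comm_monoid_add"
  assumes "\<forall>c\<in>D. k < w c \<longrightarrow> f c = 0"
  shows "sum f D = (\<Sum>i=1..k. sum f {c\<in>D. w c = i})"
proof -
  have "sum f D = sum f {c\<in>D. w c \<le> k}"
    using assms finite_D by (intro sum.mono_neutral_right) auto
  also have "\<dots> = (\<Sum>i\<in>{1..k}. sum f {c\<in>{c\<in>D. w c \<le> k}. w c = i})"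
    using finite_D weight_pos by (intro sum.group[symmetric]) auto
  also have "\<dots> = (\<Sum>i=1..k. sum f {c\<in>D. w c = i})"
    by (intro sum.cong) auto
  finally show ?thesis .
qed

lemma weighted_fun_le:
  assumes "h \<in> weighted_funs D w V k" "c \<in> D"
  shows "w c * h c \<le> k"
  using assms finite_D member_le_sum[of c D "\<lambda>c. w c * h c"]
  by (simp add: weighted_funs_def)

lemma finite_weighted_funs: "finite (weighted_funs D w V k)"
proof -
  have "h c \<le> k" if "h \<in> weighted_funs D w V k" "c \<in> D" for h c
  proof -
    have "1 * h c \<le> w c * h c"
      using weight_pos that(2) by (intro mult_le_mono1) auto
    then show ?thesis
      using weighted_fun_le[OF that] by linarith
  qed
  then have "weighted_funs D w V k \<subseteq> D \<rightarrow>\<^sub>E {0..k}"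
    by (auto simp: weighted_funs_def PiE_def Pi_def)
  then show ?thesis
    by (rule finite_subset) (simp add: finite_D finite_PiE)
qed

lemma weighted_fun_eq_0:
  assumes "h \<in> weighted_funs D w V k" "c \<in> D" "k < w c"
  shows "h c = 0"
  using weighted_fun_le[OF assms(1,2)] assms(3) by (cases "h c") auto

lemma sum_split_weighted_fun:
  assumes "h \<in> weighted_funs D w V k" "\<forall>c\<in>D. h c = 0 \<longrightarrow> f c = 0"
  shows "sum f D = (\<Sum>i=1..k. sum f {c\<in>D. w c = i})"
  using assms weighted_fun_eq_0 by (intro sum_split_by_weight) blast

lemma weight_profile_in_partitions_mult:
  assumes "h \<in> weighted_funs D w V k"
  shows "weight_profile D w k h \<in> partitions_mult k"
proof -
  have "i * weight_profile D w k h i = (\<Sum>c\<in>{c\<in>D. w c = i}. w c * h c)"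
    if "i \<in> {1..k}" for i
    using that by (simp add: weight_profile_def sum_distrib_left)
  then have "(\<Sum>i=1..k. i * weight_profile D w k h i) = (\<Sum>i=1..k. \<Sum>c\<in>{c\<in>D. w c = i}. w c * h c)"
    by simp
  also have "\<dots> = k"
    using sum_split_weighted_fun[OF assms, of "\<lambda>c. w c * h c"] assms
    by (simp add: weighted_funs_def)
  finally have "(\<Sum>i=1..k. i * weight_profile D w k h i) = k" .
  moreover have "\<forall>i. i = 0 \<or> k < i \<longrightarrow> weight_profile D w k h i = 0"
    by (simp add: weight_profile_def)
  ultimately show ?thesis
    unfolding partitions_mult_def mem_Collect_eq by (intro conjI)
qed

lemma sum_eq_part_length_weight_profile:
  assumes "h \<in> weighted_funs D w V k"
  shows "sum h D = part_length k (weight_profile D w k h)"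
proof -
  have "sum h D = (\<Sum>i=1..k. sum h {c\<in>D. w c = i})"
    by (rule sum_split_weighted_fun[OF assms]) simp
  also have "\<dots> = part_length k (weight_profile D w k h)"
    unfolding part_length_def by (intro sum.cong) (simp_all add: weight_profile_def)
  finally show ?thesis .
qed

lemma glue_by_weight_apply:
  "i \<in> {1..k} \<Longrightarrow> c \<in> D \<Longrightarrow> w c = i \<Longrightarrow> glue_by_weight D w k F c = F i c"
  by (simp add: glue_by_weight_def)

lemma weight_profile_glue_by_weight:
  assumes F: "F \<in> (\<Pi>\<^sub>E i\<in>{1..k}. {h \<in> {c\<in>D. w c = i} \<rightarrow>\<^sub>E V. sum h {c\<in>D. w c = i} = a i})"
    and a: "a \<in> partitions_mult k"
  shows "weight_profile D w k (glue_by_weight D w k F) = a"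
proof
  fix i
  show "weight_profile D w k (glue_by_weight D w k F) i = a i"
  proof (cases "i \<in> {1..k}")
    case True
    then have "sum (glue_by_weight D w k F) {c\<in>D. w c = i} = sum (F i) {c\<in>D. w c = i}"
      by (intro sum.cong) (simp_all add: glue_by_weight_apply)
    then show ?thesis
      using True PiE_mem[OF F True] by (simp add: weight_profile_def)
  next
    case False
    then show ?thesis
      by (simp only: partitions_mult_eq_0[OF a False] weight_profile_eq_0[OF False])
  qed
qed

lemma glue_by_weight_in_weighted_funs:
  assumes F: "F \<in> (\<Pi>\<^sub>E i\<in>{1..k}. {h \<in> {c\<in>D. w c = i} \<rightarrow>\<^sub>E V. sum h {c\<in>D. w c = i} = a i})"
    and a: "a \<in> partitions_mult k" and "0 \<in> V"
  shows "glue_by_weight D w k F \<in> weighted_funs D w V k"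
proof -
  let ?g = "glue_by_weight D w k F"
  have "?g c \<in> V" if "c \<in> D" for c
  proof (cases "w c \<le> k")
    case True
    then have "w c \<in> {1..k}"
      using weight_pos that by auto
    then show ?thesis
      using PiE_mem[OF F] that by (fastforce simp: glue_by_weight_apply PiE_iff)
  qed (use that \<open>0 \<in> V\<close> in \<open>simp add: glue_by_weight_def\<close>)
  then have "?g \<in> D \<rightarrow>\<^sub>E V"
    by (simp add: glue_by_weight_def)
  moreover have "(\<Sum>c\<in>{c\<in>D. w c = i}. w c * ?g c) = i * a i" if "i \<in> {1..k}" for i
  proof -
    have "(\<Sum>c\<in>{c\<in>D. w c = i}. w c * ?g c) = (\<Sum>c\<in>{c\<in>D. w c = i}. i * F i c)"
      using that by (intro sum.cong) (simp_all add: glue_by_weight_apply)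
    then show ?thesis
      using PiE_mem[OF F that] by (simp add: sum_distrib_left[symmetric])
  qed
  then have "(\<Sum>i=1..k. \<Sum>c\<in>{c\<in>D. w c = i}. w c * ?g c) = k"
    using a by (simp add: partitions_mult_def)
  moreover have "(\<Sum>c\<in>D. w c * ?g c) = (\<Sum>i=1..k. \<Sum>c\<in>{c\<in>D. w c = i}. w c * ?g c)"
    by (intro sum_split_by_weight) (auto simp: glue_by_weight_def)
  ultimately show ?thesis
    by (simp add: weighted_funs_def)
qed

lemma restrict_glue_by_weight:
  assumes F: "F \<in> (\<Pi>\<^sub>E i\<in>{1..k}. {h \<in> {c\<in>D. w c = i} \<rightarrow>\<^sub>E V. sum h {c\<in>D. w c = i} = a i})"
  shows "(\<lambda>i\<in>{1..k}. restrict (glue_by_weight D w k F) {c\<in>D. w c = i}) = F"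
proof
  fix i
  show "(\<lambda>i\<in>{1..k}. restrict (glue_by_weight D w k F) {c\<in>D. w c = i}) i = F i"
  proof (cases "i \<in> {1..k}")
    case True
    then have "F i \<in> extensional {c\<in>D. w c = i}"
      using PiE_mem[OF F True] by (simp add: PiE_def)
    then show ?thesis
      using True by (auto simp: glue_by_weight_def fun_eq_iff extensional_def)
  next
    case False
    then show ?thesis
      by (simp only: restrict_def if_not_P[OF False] if_False PiE_arb[OF F False])
  qed
qed

lemma glue_by_weight_restrict:
  assumes h: "h \<in> weighted_funs D w V k"
  shows "glue_by_weight D w k (\<lambda>i\<in>{1..k}. restrict h {c\<in>D. w c = i}) = h"
proof
  fix c
  have "h \<in> extensional D"
    using h by (simp add: weighted_funs_def PiE_def)
  then show "glue_by_weight D w k (\<lambda>i\<in>{1..k}. restrict h {c\<in>D. w c = i}) c = h c"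
    using weighted_fun_eq_0[OF h] weight_pos
    by (auto simp: glue_by_weight_def extensional_def not_le)
qed

lemma card_weight_profile_fibre:
  assumes "0 \<in> V" and a: "a \<in> partitions_mult k"
  shows "card {h \<in> weighted_funs D w V k. weight_profile D w k h = a} =
    (\<Prod>i=1..k. card {h \<in> {c\<in>D. w c = i} \<rightarrow>\<^sub>E V. sum h {c\<in>D. w c = i} = a i})"
proof -
  let ?D = "\<lambda>i. {c\<in>D. w c = i}"
  let ?fibre = "{h \<in> weighted_funs D w V k. weight_profile D w k h = a}"
  let ?T = "\<Pi>\<^sub>E i\<in>{1..k}. {h \<in> ?D i \<rightarrow>\<^sub>E V. sum h (?D i) = a i}"
  have "(\<lambda>h. \<lambda>i\<in>{1..k}. restrict h (?D i)) ` ?fibre \<subseteq> ?T"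
  proof
    fix F assume "F \<in> (\<lambda>h. \<lambda>i\<in>{1..k}. restrict h (?D i)) ` ?fibre"
    then obtain h where h: "h \<in> D \<rightarrow>\<^sub>E V" "weight_profile D w k h = a"
      and F: "F = (\<lambda>i\<in>{1..k}. restrict h (?D i))"
      by (auto simp: weighted_funs_def)
    have "restrict h (?D i) \<in> {g \<in> ?D i \<rightarrow>\<^sub>E V. sum g (?D i) = a i}" if "i \<in> {1..k}" for i
      using h that by (auto simp: PiE_iff weight_profile_def)
    then show "F \<in> ?T"
      unfolding F by (simp add: restrict_PiE_iff)
  qed
  moreover have "glue_by_weight D w k ` ?T \<subseteq> ?fibre"
    using glue_by_weight_in_weighted_funs[OF _ a \<open>0 \<in> V\<close>] weight_profile_glue_by_weight[OF _ a]
    by blast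
  ultimately have "bij_betw (glue_by_weight D w k) ?T ?fibre"
    using restrict_glue_by_weight glue_by_weight_restrict
    by (intro bij_betw_byWitness[where f' = "\<lambda>h. \<lambda>i\<in>{1..k}. restrict h (?D i)"]) auto
  then have "card ?fibre = card ?T"
    by (simp add: bij_betw_same_card)
  then show ?thesis
    by (simp add: card_PiE)
qed

lemma sum_weighted_funs_by_profile:
  fixes f :: "(nat \<Rightarrow> nat) \<Rightarrow> real"
  assumes "0 \<in> V"
  shows "(\<Sum>h\<in>weighted_funs D w V k. f (weight_profile D w k h)) =
    (\<Sum>a\<in>partitions_mult k.
      real (\<Prod>i=1..k. card {h \<in> {c\<in>D. w c = i} \<rightarrow>\<^sub>E V. sum h {c\<in>D. w c = i} = a i}) * f a)"
proof -
  let ?F = "weighted_funs D w V k"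
  have "(\<Sum>h\<in>?F. f (weight_profile D w k h)) =
      (\<Sum>a\<in>partitions_mult k. \<Sum>h\<in>{h\<in>?F. weight_profile D w k h = a}. f (weight_profile D w k h))"
    using finite_weighted_funs finite_partitions_mult weight_profile_in_partitions_mult
    by (intro sum.group[symmetric]) auto
  also have "\<dots> = (\<Sum>a\<in>partitions_mult k. real (card {h\<in>?F. weight_profile D w k h = a}) * f a)"
    by (intro sum.cong) auto
  finally show ?thesis
    using card_weight_profile_fibre[OF assms] by (simp cong: sum.cong)
qed

end

lemma H_poly_eq_card_weighted_funs:
  assumes "finite D" "\<forall>c\<in>D. 1 \<le> w c"
  shows "H_poly k (\<lambda>i. card {c\<in>D. w c = i}) = card (weighted_funs D w UNIV k)"
proof -
  have "real (card (weighted_funs D w UNIV k)) = (\<Sum>h\<in>weighted_funs D w UNIV k. 1)"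
    by simp
  also have "\<dots> = H_poly k (\<lambda>i. card {c\<in>D. w c = i})"
    using sum_weighted_funs_by_profile[OF assms, where V = UNIV and k = k and f = "\<lambda>_. 1"] assms(1)
    by (simp add: H_poly_def card_nat_funs_with_sum)
  finally show ?thesis ..
qed

lemma E_poly_eq_sum_weighted_funs:
  assumes "finite D" "\<forall>c\<in>D. 1 \<le> w c"
  shows "E_poly k (\<lambda>i. card {c\<in>D. w c = i}) =
    (\<Sum>h\<in>weighted_funs D w {0, 1} k. (-1) ^ (k - sum h D))"
proof -
  let ?F = "weighted_funs D w {0, 1} k"
  have card_01: "card {h \<in> {c\<in>D. w c = i} \<rightarrow>\<^sub>E {0, 1}. sum h {c\<in>D. w c = i} = m} =
      card {c\<in>D. w c = i} choose m" for i m
    by (rule card_01_funs_with_sum) (simp add: assms(1))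
  have "E_poly k (\<lambda>i. card {c\<in>D. w c = i}) =
      (\<Sum>a\<in>partitions_mult k. real (\<Prod>i=1..k. card {h \<in> {c\<in>D. w c = i} \<rightarrow>\<^sub>E {0, 1}.
        sum h {c\<in>D. w c = i} = a i}) * (-1) ^ (k - part_length k a))"
    by (simp only: E_poly_def card_01 mult.commute)
  also have "\<dots> = (\<Sum>h\<in>?F. (-1) ^ (k - part_length k (weight_profile D w k h)))"
    by (rule sum_weighted_funs_by_profile[OF assms, symmetric]) simp
  also have "\<dots> = (\<Sum>h\<in>?F. (-1) ^ (k - sum h D))"
    using sum_eq_part_length_weight_profile[OF assms] by (intro sum.cong) auto
  finally show ?thesis .
qed

section \<open>Fillings invariant under a permutation\<close>

definition fillings :: "'a set \<Rightarrow> nat \<Rightarrow> nat \<Rightarrow> ('a \<Rightarrow> nat \<times> nat) set" where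
  "fillings A k l =
    {g \<in> A \<rightarrow>\<^sub>E UNIV \<times> {0, 1}. (\<Sum>x\<in>A. fst (g x)) = k \<and> (\<Sum>x\<in>A. snd (g x)) = l}"

lemma finite_fillings:
  assumes "finite A"
  shows "finite (fillings A k l)"
proof -
  have "fillings A k l \<subseteq> A \<rightarrow>\<^sub>E {0..k} \<times> {0, 1}"
  proof
    fix g assume g: "g \<in> fillings A k l"
    have "fst (g x) \<le> k" if "x \<in> A" for x
      using g that assms member_le_sum[of x A "\<lambda>x. fst (g x)"] by (simp add: fillings_def)
    then show "g \<in> A \<rightarrow>\<^sub>E {0..k} \<times> {0, 1}"
      using g by (auto simp: fillings_def PiE_iff mem_Times_iff)
  qed
  then show ?thesis
    by (rule finite_subset) (simp add: assms finite_PiE)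
qed

definition colour0_sign :: "'a set \<Rightarrow> ('a \<Rightarrow> 'a) \<Rightarrow> ('a \<Rightarrow> nat \<times> nat) \<Rightarrow> int" where
  "colour0_sign A \<sigma> g = sign (perm_restrict \<sigma> {x\<in>A. snd (g x) = 0})"

lemma invariant_on_orbit:
  assumes "g \<circ> \<sigma> = g" "y \<in> orbit \<sigma> x"
  shows "g y = g x"
  using assms(2)
proof (induction rule: orbit.induct)
  case base
  then show ?case using assms(1) by (metis comp_apply)
next
  case (step y)
  then show ?case using assms(1) by (metis comp_apply)
qed

definition cycle_filling :: "'a set \<Rightarrow> ('a \<Rightarrow> 'a) \<Rightarrow> ('a set \<Rightarrow> nat) \<times> ('a set \<Rightarrow> nat) \<Rightarrow> 'a \<Rightarrow> nat \<times> nat"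
  where "cycle_filling A \<sigma> = (\<lambda>(h1, h2). \<lambda>x\<in>A. (h1 (orbit \<sigma> x), h2 (orbit \<sigma> x)))"

definition cycle_values :: "'a set \<Rightarrow> ('a \<Rightarrow> 'a) \<Rightarrow> ('a \<Rightarrow> nat \<times> nat) \<Rightarrow> ('a set \<Rightarrow> nat) \<times> ('a set \<Rightarrow> nat)"
  where "cycle_values A \<sigma> g =
    (\<lambda>c\<in>orbit \<sigma> ` A. fst (the_elem (g ` c)), \<lambda>c\<in>orbit \<sigma> ` A. snd (the_elem (g ` c)))"

context
  fixes A :: "'a set" and \<sigma> :: "'a \<Rightarrow> 'a"
  assumes finite_A: "finite A" and \<sigma>_permutes: "\<sigma> permutes A"
begin

lemma permutation_\<sigma>: "permutation \<sigma>"
  using finite_A \<sigma>_permutes permutation_permutes by blast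

lemma card_orbit_pos: "1 \<le> card (orbit \<sigma> x)"
  using finite_orbit[OF permutation_self_in_orbit[OF permutation_\<sigma>]] orbit_nonempty
  by (simp add: Suc_le_eq card_gt_0_iff)

lemma sum_over_orbits: "(\<Sum>x\<in>A. f (orbit \<sigma> x)) = (\<Sum>c\<in>orbit \<sigma> ` A. card c * f c)"
proof -
  have fibre: "(\<Sum>x\<in>{x\<in>A. orbit \<sigma> x = c}. f (orbit \<sigma> x)) = card c * f c"
    if "c \<in> orbit \<sigma> ` A" for c
  proof -
    have "{x\<in>A. orbit \<sigma> x = c} = c"
      using that permutes_orbit_subset[OF \<sigma>_permutes] permutation_self_in_orbit[OF permutation_\<sigma>]
        orbit_eq_of_mem_orbit[OF permutation_\<sigma>] by blast
    moreover have "(\<Sum>x\<in>{x\<in>A. orbit \<sigma> x = c}. f (orbit \<sigma> x)) = (\<Sum>x\<in>{x\<in>A. orbit \<sigma> x = c}. f c)"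
      by (rule sum.cong) auto
    ultimately show ?thesis by simp
  qed
  have "(\<Sum>x\<in>A. f (orbit \<sigma> x)) = (\<Sum>c\<in>orbit \<sigma> ` A. \<Sum>x\<in>{x\<in>A. orbit \<sigma> x = c}. f (orbit \<sigma> x))"
    using finite_A by (intro sum.group[symmetric]) auto
  also have "\<dots> = (\<Sum>c\<in>orbit \<sigma> ` A. card c * f c)"
    using fibre by (rule sum.cong[OF refl])
  finally show ?thesis .
qed

lemma perm_restrict_permutes:
  assumes "F \<subseteq> A" "\<And>x. x \<in> F \<Longrightarrow> \<sigma> x \<in> F"
  shows "perm_restrict \<sigma> F permutes F"
proof (rule bij_imp_permutes)
  have inj: "inj_on (perm_restrict \<sigma> F) F"
    using permutes_inj[OF \<sigma>_permutes] by (auto simp: inj_on_def perm_restrict_simps)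
  have "perm_restrict \<sigma> F ` F \<subseteq> F"
    using assms(2) by (auto simp: perm_restrict_simps)
  then have "perm_restrict \<sigma> F ` F = F"
    using endo_inj_surj[OF finite_subset[OF assms(1) finite_A] _ inj] by blast
  then show "bij_betw (perm_restrict \<sigma> F) F F"
    using inj by (simp add: bij_betw_def)
qed (simp add: perm_restrict_simps)

lemma sign_perm_restrict_eq_power_orbits:
  assumes "F \<subseteq> A" "\<And>x. x \<in> F \<Longrightarrow> \<sigma> x \<in> F"
  shows "sign (perm_restrict \<sigma> F) = (-1) ^ (\<Sum>c\<in>orbit \<sigma> ` F. card c - 1)"
proof -
  have "orbit (perm_restrict \<sigma> F) ` F = orbit \<sigma> ` F"
    using orbit_perm_restrict[OF assms(2)] by (intro image_cong) auto
  then show ?thesis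
    using sign_eq_power_orbits[OF finite_subset[OF assms(1) finite_A] perm_restrict_permutes[OF assms]]
    by simp
qed

lemma cycle_filling_in_fillings:
  assumes "h1 \<in> weighted_funs (orbit \<sigma> ` A) card UNIV k"
    and "h2 \<in> weighted_funs (orbit \<sigma> ` A) card {0, 1} l"
  shows "cycle_filling A \<sigma> (h1, h2) \<in> {g \<in> fillings A k l. g \<circ> \<sigma> = g}"
proof -
  let ?g = "cycle_filling A \<sigma> (h1, h2)"
  have "?g \<in> A \<rightarrow>\<^sub>E UNIV \<times> {0, 1}"
    using assms(2) by (auto simp: cycle_filling_def weighted_funs_def PiE_iff)
  moreover have "(\<Sum>x\<in>A. fst (?g x)) = k" "(\<Sum>x\<in>A. snd (?g x)) = l"
    using assms sum_over_orbits[of h1] sum_over_orbits[of h2]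
    by (simp_all add: cycle_filling_def weighted_funs_def)
  moreover have "?g \<circ> \<sigma> = ?g"
  proof
    fix x
    show "(?g \<circ> \<sigma>) x = ?g x"
      using permutes_in_image[OF \<sigma>_permutes, of x] permutes_not_in[OF \<sigma>_permutes, of x]
        permutation_orbit_step[OF permutation_\<sigma>, of x]
      by (cases "x \<in> A") (simp_all add: cycle_filling_def)
  qed
  ultimately show ?thesis
    by (simp add: fillings_def)
qed

lemma the_elem_image_orbit:
  assumes "g \<circ> \<sigma> = g"
  shows "the_elem (g ` orbit \<sigma> x) = g x"
proof -
  have "g ` orbit \<sigma> x = {g x}"
    using invariant_on_orbit[OF assms] permutation_self_in_orbit[OF permutation_\<sigma>] by blast
  then show ?thesis
    by simp
qed

lemma cycle_values_in_weighted_funs: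
  assumes g: "g \<in> fillings A k l" "g \<circ> \<sigma> = g"
  shows "cycle_values A \<sigma> g \<in>
    weighted_funs (orbit \<sigma> ` A) card UNIV k \<times> weighted_funs (orbit \<sigma> ` A) card {0, 1} l"
proof -
  let ?C = "orbit \<sigma> ` A"
  have "(\<Sum>c\<in>?C. card c * fst (cycle_values A \<sigma> g) c) = (\<Sum>x\<in>A. fst (g x))"
    "(\<Sum>c\<in>?C. card c * snd (cycle_values A \<sigma> g) c) = (\<Sum>x\<in>A. snd (g x))"
    using sum_over_orbits[of "fst (cycle_values A \<sigma> g)"] sum_over_orbits[of "snd (cycle_values A \<sigma> g)"]
      the_elem_image_orbit[OF g(2)]
    by (simp_all add: cycle_values_def cong: sum.cong)
  moreover have "snd (the_elem (g ` c)) \<in> {0, 1}" if "c \<in> ?C" for c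
    using g(1) that the_elem_image_orbit[OF g(2)] by (auto simp: fillings_def PiE_iff)
  ultimately show ?thesis
    using g(1) by (simp add: weighted_funs_def fillings_def cycle_values_def restrict_PiE_iff)
qed

lemma cycle_values_cycle_filling:
  assumes "h1 \<in> weighted_funs (orbit \<sigma> ` A) card UNIV k"
    and "h2 \<in> weighted_funs (orbit \<sigma> ` A) card {0, 1} l"
  shows "cycle_values A \<sigma> (cycle_filling A \<sigma> (h1, h2)) = (h1, h2)"
proof -
  have inv: "cycle_filling A \<sigma> (h1, h2) \<circ> \<sigma> = cycle_filling A \<sigma> (h1, h2)"
    using cycle_filling_in_fillings[OF assms] by blast
  have "fst (cycle_values A \<sigma> (cycle_filling A \<sigma> (h1, h2))) c = h1 c \<and>
      snd (cycle_values A \<sigma> (cycle_filling A \<sigma> (h1, h2))) c = h2 c" for c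
  proof (cases "c \<in> orbit \<sigma> ` A")
    case True
    then obtain x where "x \<in> A" "c = orbit \<sigma> x"
      by blast
    then show ?thesis
      using the_elem_image_orbit[OF inv, of x] by (simp add: cycle_values_def cycle_filling_def)
  next
    case False
    then show ?thesis
      using assms by (simp add: cycle_values_def weighted_funs_def PiE_def extensional_def)
  qed
  then show ?thesis
    by (simp add: prod_eq_iff fun_eq_iff)
qed

lemma bij_betw_cycle_filling:
  "bij_betw (cycle_filling A \<sigma>)
    (weighted_funs (orbit \<sigma> ` A) card UNIV k \<times> weighted_funs (orbit \<sigma> ` A) card {0, 1} l)
    {g \<in> fillings A k l. g \<circ> \<sigma> = g}"
proof (rule bij_betw_byWitness[where f' = "cycle_values A \<sigma>"])
  let ?H = "weighted_funs (orbit \<sigma> ` A) card UNIV k \<times> weighted_funs (orbit \<sigma> ` A) card {0, 1} l"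
  show "\<forall>h\<in>?H. cycle_values A \<sigma> (cycle_filling A \<sigma> h) = h"
    using cycle_values_cycle_filling by auto
  show "\<forall>g\<in>{g \<in> fillings A k l. g \<circ> \<sigma> = g}. cycle_filling A \<sigma> (cycle_values A \<sigma> g) = g"
  proof (intro ballI ext)
    fix g x assume "g \<in> {g \<in> fillings A k l. g \<circ> \<sigma> = g}"
    then have g: "g \<in> fillings A k l" "g \<circ> \<sigma> = g"
      by auto
    show "cycle_filling A \<sigma> (cycle_values A \<sigma> g) x = g x"
      using the_elem_image_orbit[OF g(2), of x] g(1)
      by (cases "x \<in> A") (auto simp: cycle_values_def cycle_filling_def fillings_def PiE_def extensional_def)
  qed
  show "cycle_filling A \<sigma> ` ?H \<subseteq> {g \<in> fillings A k l. g \<circ> \<sigma> = g}"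
    using cycle_filling_in_fillings by fastforce
  show "cycle_values A \<sigma> ` {g \<in> fillings A k l. g \<circ> \<sigma> = g} \<subseteq> ?H"
    using cycle_values_in_weighted_funs by blast
qed

text \<open>With \<open>s\<^sub>0\<close>, \<open>s\<^sub>1\<close> the sums of \<open>|c| - 1\<close> over the cycles of colour 0 and 1,
  \<open>sign \<sigma> = (-1)\<^bsup>s\<^sub>0 + s\<^sub>1\<^esup>\<close> while \<open>l - \<Sum> h\<^sub>2 = s\<^sub>1\<close>.\<close>
lemma colour0_sign_cycle_filling:
  assumes h2: "h2 \<in> weighted_funs (orbit \<sigma> ` A) card {0, 1} l"
  shows "colour0_sign A \<sigma> (cycle_filling A \<sigma> (h1, h2)) = sign \<sigma> * (-1) ^ (l - sum h2 (orbit \<sigma> ` A))"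
proof -
  let ?C = "orbit \<sigma> ` A"
  define s0 where "s0 = (\<Sum>c\<in>{c\<in>?C. h2 c = 0}. card c - 1)"
  define s1 where "s1 = (\<Sum>c\<in>?C. (card c - 1) * h2 c)"
  have h2_01: "h2 c = 0 \<or> h2 c = 1" if "c \<in> ?C" for c
    using h2 that by (auto simp: weighted_funs_def PiE_iff)
  have "card c - 1 = (if h2 c = 0 then card c - 1 else 0) + (card c - 1) * h2 c" if "c \<in> ?C" for c
    using h2_01[OF that] by auto
  then have "(\<Sum>c\<in>?C. card c - 1) = (\<Sum>c\<in>?C. (if h2 c = 0 then card c - 1 else 0) + (card c - 1) * h2 c)"
    by (rule sum.cong[OF refl])
  also have "\<dots> = s0 + s1"
    by (simp only: s0_def s1_def sum.distrib sum.inter_filter[OF finite_imageI[OF finite_A]])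
  finally have sign_\<sigma>: "sign \<sigma> = (-1) ^ (s0 + s1)"
    using sign_eq_power_orbits[OF finite_A \<sigma>_permutes] by simp
  have "l = (\<Sum>c\<in>?C. card c * h2 c)"
    using h2 by (simp add: weighted_funs_def)
  also have "\<dots> = (\<Sum>c\<in>?C. h2 c + (card c - 1) * h2 c)"
    using card_orbit_pos by (intro sum.cong) (auto simp: algebra_simps)
  finally have l_minus: "l - sum h2 ?C = s1"
    by (simp add: s1_def sum.distrib)
  let ?F = "{x\<in>A. h2 (orbit \<sigma> x) = 0}"
  have "\<sigma> x \<in> ?F" if "x \<in> ?F" for x
    using that permutes_in_image[OF \<sigma>_permutes]
      permutation_orbit_step[OF permutation_\<sigma>] by auto
  then have "sign (perm_restrict \<sigma> ?F) = (-1) ^ (\<Sum>c\<in>orbit \<sigma> ` ?F. card c - 1)"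
    by (intro sign_perm_restrict_eq_power_orbits) auto
  also have "orbit \<sigma> ` ?F = {c\<in>?C. h2 c = 0}"
    by auto
  also have "?F = {x\<in>A. snd (cycle_filling A \<sigma> (h1, h2) x) = 0}"
    by (auto simp: cycle_filling_def)
  finally have "colour0_sign A \<sigma> (cycle_filling A \<sigma> (h1, h2)) = (-1) ^ s0"
    by (simp add: colour0_sign_def s0_def)
  also have "\<dots> = sign \<sigma> * (-1) ^ s1"
    by (simp add: sign_\<sigma> power_add mult.assoc flip: power2_eq_square power_mult)
  finally show ?thesis
    using l_minus by simp
qed

lemma sign_mult_H_E_eq_sum_colour0_sign:
  defines "X \<equiv> \<lambda>i. card {c \<in> orbit \<sigma> ` A. card c = i}"
  shows "real_of_int (sign \<sigma>) * (H_poly k X * E_poly l X) =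
    (\<Sum>g\<in>{g \<in> fillings A k l. g \<circ> \<sigma> = g}. real_of_int (colour0_sign A \<sigma> g))"
proof -
  let ?C = "orbit \<sigma> ` A"
  let ?H1 = "weighted_funs ?C card UNIV k" and ?H2 = "weighted_funs ?C card {0, 1} l"
  have C: "finite ?C" "\<forall>c\<in>?C. 1 \<le> card c"
    using finite_A card_orbit_pos by auto
  have "(\<Sum>g\<in>{g \<in> fillings A k l. g \<circ> \<sigma> = g}. real_of_int (colour0_sign A \<sigma> g)) =
      (\<Sum>p\<in>?H1 \<times> ?H2. real_of_int (colour0_sign A \<sigma> (cycle_filling A \<sigma> p)))"
    by (rule sum.reindex_bij_betw[OF bij_betw_cycle_filling, symmetric])
  also have "\<dots> = (\<Sum>p\<in>?H1 \<times> ?H2. real_of_int (sign \<sigma>) * (-1) ^ (l - sum (snd p) ?C))"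
    by (intro sum.cong refl) (clarsimp simp: colour0_sign_cycle_filling)
  also have "\<dots> = real (card ?H1) * (real_of_int (sign \<sigma>) * (\<Sum>h2\<in>?H2. (-1) ^ (l - sum h2 ?C)))"
    by (simp add: sum.cartesian_product' sum_distrib_left)
  also have "\<dots> = real_of_int (sign \<sigma>) * (H_poly k X * E_poly l X)"
    using H_poly_eq_card_weighted_funs[OF C] E_poly_eq_sum_weighted_funs[OF C]
    by (simp add: X_def)
  finally show ?thesis ..
qed

end

section \<open>Stabilizers\<close>

definition stabilizer :: "'a set \<Rightarrow> ('a \<Rightarrow> 'b) \<Rightarrow> ('a \<Rightarrow> 'a) set" where
  "stabilizer A g = {\<sigma>. \<sigma> permutes A \<and> g \<circ> \<sigma> = g}"

lemma colour0_sign_eq_1: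
  assumes "inj_on g {x\<in>A. snd (g x) = 0}" "\<sigma> \<in> stabilizer A g"
  shows "colour0_sign A \<sigma> g = 1"
proof -
  have "\<sigma> z = z" if "z \<in> A" "snd (g z) = 0" for z
  proof -
    have "g (\<sigma> z) = g z"
      using assms(2) by (auto simp: stabilizer_def fun_eq_iff)
    moreover have "\<sigma> z \<in> A"
      using assms(2) that(1) by (auto simp: stabilizer_def permutes_in_image)
    ultimately show ?thesis
      using assms(1) that by (auto simp: inj_on_def)
  qed
  then have "perm_restrict \<sigma> {x\<in>A. snd (g x) = 0} = id"
    by (auto simp: fun_eq_iff perm_restrict_def)
  then show ?thesis
    by (simp add: colour0_sign_def)
qed

text \<open>Two colour-0 points with equal values are swapped by a transposition in the stabilizer,
  and right multiplication by it is a sign-reversing involution.\<close>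
lemma sum_colour0_sign_eq_0:
  assumes finite_A: "finite A" and not_inj: "\<not> inj_on g {x\<in>A. snd (g x) = 0}"
  shows "(\<Sum>\<sigma>\<in>stabilizer A g. colour0_sign A \<sigma> g) = 0"
proof -
  let ?F = "{x\<in>A. snd (g x) = 0}"
  obtain x y where xy: "x \<in> ?F" "y \<in> ?F" "x \<noteq> y" "g x = g y"
    using not_inj by (auto simp: inj_on_def)
  let ?t = "transpose x y"
  have g_t: "g \<circ> ?t = g"
    using xy(4) by (auto simp: fun_eq_iff transpose_def)
  have t_F: "?t z \<in> ?F \<longleftrightarrow> z \<in> ?F" for z
    using xy(1,2) by (auto simp: transpose_def)
  have stab_t: "\<sigma> \<circ> ?t \<in> stabilizer A g" if "\<sigma> \<in> stabilizer A g" for \<sigma>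
    using that xy(1,2) g_t permutes_compose[OF permutes_swap_id]
    by (auto simp: stabilizer_def simp flip: comp_assoc)
  have bij: "bij_betw (\<lambda>\<sigma>. \<sigma> \<circ> ?t) (stabilizer A g) (stabilizer A g)"
    by (rule bij_betw_byWitness[where f' = "\<lambda>\<sigma>. \<sigma> \<circ> ?t"]) (auto simp: comp_assoc stab_t)
  have flip: "colour0_sign A (\<sigma> \<circ> ?t) g = - colour0_sign A \<sigma> g" if "\<sigma> \<in> stabilizer A g" for \<sigma>
  proof -
    have \<sigma>: "\<sigma> permutes A" "g \<circ> \<sigma> = g"
      using that by (auto simp: stabilizer_def)
    have "\<sigma> z \<in> ?F" if "z \<in> ?F" for z
      using that \<sigma> permutes_in_image[OF \<sigma>(1)] by (auto simp: fun_eq_iff)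
    then have "perm_restrict \<sigma> ?F permutes ?F"
      by (intro perm_restrict_permutes[OF finite_A \<sigma>(1)]) auto
    then have "permutation (perm_restrict \<sigma> ?F)"
      using finite_A permutation_permutes by fastforce
    moreover have "perm_restrict (\<sigma> \<circ> ?t) ?F = perm_restrict \<sigma> ?F \<circ> ?t"
      using t_F xy(1,2) by (auto simp: fun_eq_iff perm_restrict_def transpose_def)
    ultimately show ?thesis
      using xy(3) by (simp add: colour0_sign_def sign_compose permutation_swap_id sign_swap_id)
  qed
  have "(\<Sum>\<sigma>\<in>stabilizer A g. colour0_sign A \<sigma> g) = (\<Sum>\<sigma>\<in>stabilizer A g. colour0_sign A (\<sigma> \<circ> ?t) g)"
    by (rule sum.reindex_bij_betw[OF bij, symmetric])
  also have "\<dots> = - (\<Sum>\<sigma>\<in>stabilizer A g. colour0_sign A \<sigma> g)"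
    using flip by (simp add: sum_negf)
  finally show ?thesis
    by simp
qed

lemma sum_colour0_sign_stabilizer:
  assumes "finite A"
  shows "(\<Sum>\<sigma>\<in>stabilizer A g. colour0_sign A \<sigma> g) =
    (if inj_on g {x\<in>A. snd (g x) = 0} then int (card (stabilizer A g)) else 0)"
  using colour0_sign_eq_1[of g A] sum_colour0_sign_eq_0[OF assms, of g] by simp

lemma image_mset_eq_iff_comp_permutes:
  assumes "finite A" "g \<in> extensional A" "g' \<in> extensional A"
  shows "image_mset g' (mset_set A) = image_mset g (mset_set A) \<longleftrightarrow> (\<exists>\<tau>. \<tau> permutes A \<and> g' = g \<circ> \<tau>)"
proof
  assume "image_mset g' (mset_set A) = image_mset g (mset_set A)"
  then obtain \<tau> where \<tau>: "\<tau> permutes A" "\<forall>x\<in>A. g' x = g (\<tau> x)"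
    using image_mset_eq_implies_permutes[OF assms(1)] by blast
  have "g' = g \<circ> \<tau>"
  proof
    fix x
    show "g' x = (g \<circ> \<tau>) x"
      using \<tau> assms(2,3) permutes_not_in[OF \<tau>(1)] by (cases "x \<in> A") (auto simp: extensional_def)
  qed
  then show "\<exists>\<tau>. \<tau> permutes A \<and> g' = g \<circ> \<tau>"
    using \<tau>(1) by blast
next
  assume "\<exists>\<tau>. \<tau> permutes A \<and> g' = g \<circ> \<tau>"
  then show "image_mset g' (mset_set A) = image_mset g (mset_set A)"
    using permutes_implies_image_mset_eq[of _ A g' g] by fastforce
qed

lemma card_stabilizer_comp:
  assumes "\<tau>\<^sub>0 permutes A"
  shows "card {\<tau>. \<tau> permutes A \<and> g \<circ> \<tau> = g \<circ> \<tau>\<^sub>0} = card (stabilizer A (g \<circ> \<tau>\<^sub>0))"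
proof -
  have "bij_betw (\<lambda>\<sigma>. \<tau>\<^sub>0 \<circ> \<sigma>) (stabilizer A (g \<circ> \<tau>\<^sub>0)) {\<tau>. \<tau> permutes A \<and> g \<circ> \<tau> = g \<circ> \<tau>\<^sub>0}"
  proof (rule bij_betw_byWitness[where f' = "\<lambda>\<tau>. inv \<tau>\<^sub>0 \<circ> \<tau>"])
    show "\<forall>\<sigma>\<in>stabilizer A (g \<circ> \<tau>\<^sub>0). inv \<tau>\<^sub>0 \<circ> (\<tau>\<^sub>0 \<circ> \<sigma>) = \<sigma>"
      using permutes_inv_o(2)[OF assms] by (simp flip: comp_assoc)
    show "\<forall>\<tau>\<in>{\<tau>. \<tau> permutes A \<and> g \<circ> \<tau> = g \<circ> \<tau>\<^sub>0}. \<tau>\<^sub>0 \<circ> (inv \<tau>\<^sub>0 \<circ> \<tau>) = \<tau>"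
      using permutes_inv_o(1)[OF assms] by (simp flip: comp_assoc)
    have "\<tau>\<^sub>0 \<circ> \<sigma> permutes A \<and> g \<circ> (\<tau>\<^sub>0 \<circ> \<sigma>) = g \<circ> \<tau>\<^sub>0"
      if "\<sigma> \<in> stabilizer A (g \<circ> \<tau>\<^sub>0)" for \<sigma>
      using that permutes_compose[OF _ assms] by (simp add: stabilizer_def comp_assoc)
    then show "(\<lambda>\<sigma>. \<tau>\<^sub>0 \<circ> \<sigma>) ` stabilizer A (g \<circ> \<tau>\<^sub>0) \<subseteq> {\<tau>. \<tau> permutes A \<and> g \<circ> \<tau> = g \<circ> \<tau>\<^sub>0}"
      by blast
    have "inv \<tau>\<^sub>0 \<circ> \<tau> \<in> stabilizer A (g \<circ> \<tau>\<^sub>0)" if "\<tau> permutes A" "g \<circ> \<tau> = g \<circ> \<tau>\<^sub>0" for \<tau>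
    proof -
      have "g \<circ> \<tau>\<^sub>0 \<circ> (inv \<tau>\<^sub>0 \<circ> \<tau>) = g \<circ> (\<tau>\<^sub>0 \<circ> inv \<tau>\<^sub>0) \<circ> \<tau>"
        by (simp add: comp_assoc)
      also have "\<dots> = g \<circ> \<tau>\<^sub>0"
        using permutes_inv_o(1)[OF assms] that(2) by simp
      finally show ?thesis
        using permutes_compose[OF that(1) permutes_inv[OF assms]] by (simp add: stabilizer_def)
    qed
    then show "(\<lambda>\<tau>. inv \<tau>\<^sub>0 \<circ> \<tau>) ` {\<tau>. \<tau> permutes A \<and> g \<circ> \<tau> = g \<circ> \<tau>\<^sub>0} \<subseteq> stabilizer A (g \<circ> \<tau>\<^sub>0)"
      by blast
  qed
  then show ?thesis
    by (simp add: bij_betw_same_card)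
qed

lemma sum_card_stabilizer_orbit:
  assumes "finite A"
  shows "(\<Sum>g\<in>(\<lambda>\<tau>. g\<^sub>0 \<circ> \<tau>) ` {\<tau>. \<tau> permutes A}. card (stabilizer A g)) = fact (card A)"
proof -
  let ?S = "{\<tau>. \<tau> permutes A}"
  have "fact (card A) = card ?S"
    using card_permutations[OF refl assms] by simp
  also have "\<dots> = (\<Sum>g\<in>(\<lambda>\<tau>. g\<^sub>0 \<circ> \<tau>) ` ?S. card {\<tau>\<in>?S. g\<^sub>0 \<circ> \<tau> = g})"
    unfolding card_eq_sum by (rule sum.image_gen[OF finite_permutations[OF assms]])
  also have "\<dots> = (\<Sum>g\<in>(\<lambda>\<tau>. g\<^sub>0 \<circ> \<tau>) ` ?S. card (stabilizer A g))"
    using card_stabilizer_comp by (intro sum.cong) auto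
  finally show ?thesis ..
qed

text \<open>Orbits of the right action \<open>g \<mapsto> g \<circ> \<tau>\<close> are told apart by the multiset of values,
  and by orbit-stabilizer each orbit contributes \<open>(card A)!\<close>.\<close>
lemma sum_card_stabilizer:
  assumes "finite A" "finite F" "F \<subseteq> extensional A"
    and closed: "\<And>g \<tau>. g \<in> F \<Longrightarrow> \<tau> permutes A \<Longrightarrow> g \<circ> \<tau> \<in> F"
  shows "(\<Sum>g\<in>F. card (stabilizer A g)) = fact (card A) * card ((\<lambda>g. image_mset g (mset_set A)) ` F)"
proof -
  let ?M = "\<lambda>g. image_mset g (mset_set A)"
  have orbit: "{g\<in>F. ?M g = ?M g\<^sub>0} = (\<lambda>\<tau>. g\<^sub>0 \<circ> \<tau>) ` {\<tau>. \<tau> permutes A}" if "g\<^sub>0 \<in> F" for g\<^sub>0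
  proof -
    have "?M g = ?M g\<^sub>0 \<longleftrightarrow> (\<exists>\<tau>. \<tau> permutes A \<and> g = g\<^sub>0 \<circ> \<tau>)" if "g \<in> F" for g
      using image_mset_eq_iff_comp_permutes[OF assms(1)] subsetD[OF assms(3)] \<open>g\<^sub>0 \<in> F\<close> that by metis
    then show ?thesis
      using closed[OF that] by blast
  qed
  have "(\<Sum>g\<in>F. card (stabilizer A g)) = (\<Sum>m\<in>?M ` F. \<Sum>g\<in>{g\<in>F. ?M g = m}. card (stabilizer A g))"
    by (rule sum.image_gen[OF assms(2)])
  also have "\<dots> = (\<Sum>m\<in>?M ` F. fact (card A))"
    using orbit sum_card_stabilizer_orbit[OF assms(1)] by (intro sum.cong) auto
  finally show ?thesis
    by simp
qed

section \<open>Multisets of values of fillings\<close>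

lemma obtain_fun_with_image_mset:
  assumes "finite A" "size M = card A"
  obtains g where "g \<in> A \<rightarrow>\<^sub>E set_mset M" "image_mset g (mset_set A) = M"
proof -
  obtain xs where xs: "mset xs = M"
    using ex_mset by blast
  obtain f where f: "bij_betw f A {0..<card A}"
    using ex_bij_betw_finite_nat[OF assms(1)] by blast
  let ?g = "\<lambda>x\<in>A. xs ! f x"
  have len: "length xs = card A"
    using xs assms(2) by auto
  have "image_mset ?g (mset_set A) = image_mset (\<lambda>x. xs ! f x) (mset_set A)"
    by (rule image_mset_cong) (simp add: assms(1))
  also have "\<dots> = image_mset (\<lambda>i. xs ! i) (image_mset f (mset_set A))"
    by (simp only: multiset.map_comp o_def)
  also have "\<dots> = image_mset (\<lambda>i. xs ! i) (mset [0..<card A])"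
    using f by (simp add: image_mset_mset_set bij_betw_def)
  also have "\<dots> = M"
    by (simp only: len[symmetric] mset_map[symmetric] map_nth xs)
  finally have "image_mset ?g (mset_set A) = M" .
  moreover have "?g \<in> A \<rightarrow>\<^sub>E set_mset M"
    using bij_betwE[OF f] len xs by auto
  ultimately show ?thesis
    using that by blast
qed

lemma inj_on_colour0_iff_count_le_1:
  assumes "finite A"
  shows "inj_on g {x\<in>A. snd (g x) = 0} \<longleftrightarrow> (\<forall>v. count (image_mset g (mset_set A)) (v, 0) \<le> 1)"
proof -
  let ?F = "{x\<in>A. snd (g x) = 0}"
  have "inj_on g ?F \<longleftrightarrow> (\<forall>v. \<forall>x\<in>{x\<in>A. g x = (v, 0)}. \<forall>y\<in>{x\<in>A. g x = (v, 0)}. x = y)"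
  proof
    assume "inj_on g ?F"
    then show "\<forall>v. \<forall>x\<in>{x\<in>A. g x = (v, 0)}. \<forall>y\<in>{x\<in>A. g x = (v, 0)}. x = y"
      by (auto simp: inj_on_def)
  next
    assume H: "\<forall>v. \<forall>x\<in>{x\<in>A. g x = (v, 0)}. \<forall>y\<in>{x\<in>A. g x = (v, 0)}. x = y"
    show "inj_on g ?F"
    proof (rule inj_onI)
      fix x y assume xy: "x \<in> ?F" "y \<in> ?F" "g x = g y"
      then have "x \<in> {z\<in>A. g z = (fst (g x), 0)}" "y \<in> {z\<in>A. g z = (fst (g x), 0)}"
        by (auto simp: prod_eq_iff)
      then show "x = y"
        by (rule H[rule_format, where v = "fst (g x)"])
    qed
  qed
  also have "\<dots> \<longleftrightarrow> (\<forall>v. card {x\<in>A. g x = (v, 0)} \<le> 1)"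
    using assms by (simp add: card_le_Suc0_iff_eq)
  finally show ?thesis
    using assms by (simp add: count_image_mset_eq_card_vimage)
qed

lemma distinct_iff_count_le_1: "distinct xs \<longleftrightarrow> (\<forall>v. count (mset xs) v \<le> 1)"
proof
  assume "distinct xs"
  then show "\<forall>v. count (mset xs) v \<le> 1"
    by (simp add: distinct_count_atmost_1)
next
  assume le: "\<forall>v. count (mset xs) v \<le> 1"
  have "count (mset xs) a = (if a \<in> set xs then 1 else 0)" for a
    using le[rule_format, of a] by (cases "a \<in> set xs") (auto simp: le_Suc_eq count_mset_0_iff)
  then show "distinct xs"
    by (simp add: distinct_count_atmost_1)
qed

lemma sorted_desc_list_eqI:
  fixes xs ys :: "'a::linorder list"
  assumes "sorted_wrt (\<ge>) xs" "sorted_wrt (\<ge>) ys" "mset xs = mset ys"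
  shows "xs = ys"
proof -
  have "sort (rev xs) = rev ys"
    using assms by (intro properties_for_sort) (simp_all add: sorted_wrt_rev)
  moreover have "sort (rev xs) = rev xs"
    using assms(1) by (intro sorted_sort_id) (simp add: sorted_wrt_rev)
  ultimately show ?thesis
    by simp
qed

lemma sorted_strict_desc_iff:
  "sorted_wrt (>) (xs :: 'a::linorder list) \<longleftrightarrow> sorted_wrt (\<ge>) xs \<and> distinct xs"
  using strict_sorted_iff[of "rev xs"] by (simp add: sorted_wrt_rev)

lemma count_image_mset_Pair:
  "count (image_mset (\<lambda>v. (v, c)) N) (w, d) = (if d = c then count N w else 0)"
  by (induction N) auto

definition coloured_mset :: "nat list \<times> nat list \<Rightarrow> (nat \<times> nat) multiset" where
  "coloured_mset = (\<lambda>(lam, mu). image_mset (\<lambda>v. (v, 1)) (mset lam) + image_mset (\<lambda>v. (v, 0)) (mset mu))"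

definition colour_part :: "nat \<Rightarrow> (nat \<times> nat) multiset \<Rightarrow> nat multiset" where
  "colour_part c M = image_mset fst (filter_mset (\<lambda>p. snd p = c) M)"

lemma set_coloured_mset: "set_mset (coloured_mset (lam, mu)) \<subseteq> UNIV \<times> {0, 1}"
  by (auto simp: coloured_mset_def)

lemma coloured_mset_simps:
  "size (coloured_mset (lam, mu)) = length lam + length mu"
  "sum_mset (image_mset fst (coloured_mset (lam, mu))) = sum_list lam + sum_list mu"
  "sum_mset (image_mset snd (coloured_mset (lam, mu))) = length lam"
  "count (coloured_mset (lam, mu)) (v, 0) = count (mset mu) v"
  "colour_part 1 (coloured_mset (lam, mu)) = mset lam"
  "colour_part 0 (coloured_mset (lam, mu)) = mset mu"
  by (auto simp: coloured_mset_def colour_part_def multiset.map_comp o_def filter_mset_image_mset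
      sum_mset_sum_list count_image_mset_Pair)

lemma coloured_mset_colour_parts:
  assumes "set_mset M \<subseteq> UNIV \<times> {0, 1}" "mset xs = colour_part 1 M" "mset ys = colour_part 0 M"
  shows "coloured_mset (xs, ys) = M"
proof -
  have part: "image_mset (\<lambda>v. (v, c)) (colour_part c M) = filter_mset (\<lambda>p. snd p = c) M" for c
  proof -
    have "image_mset (\<lambda>p. (fst p, c)) (filter_mset (\<lambda>p. snd p = c) M) =
        image_mset id (filter_mset (\<lambda>p. snd p = c) M)"
      by (rule image_mset_cong) auto
    then show ?thesis
      by (simp add: colour_part_def multiset.map_comp o_def)
  qed
  have "filter_mset (\<lambda>p. \<not> snd p = 1) M = filter_mset (\<lambda>p. snd p = 0) M"
    using assms(1) by (intro filter_mset_cong) auto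
  then show ?thesis
    using multiset_partition[of M "\<lambda>p. snd p = 1"] assms(2,3)
    by (simp add: coloured_mset_def part)
qed

definition filling_types :: "nat \<Rightarrow> nat \<Rightarrow> nat \<Rightarrow> (nat \<times> nat) multiset set" where
  "filling_types n k l = {M. size M = n \<and> set_mset M \<subseteq> UNIV \<times> {0, 1} \<and>
    sum_mset (image_mset fst M) = k \<and> sum_mset (image_mset snd M) = l \<and> (\<forall>v. count M (v, 0) \<le> 1)}"

lemma inj_on_coloured_mset:
  "inj_on coloured_mset {(lam, mu). sorted_wrt (\<ge>) lam \<and> sorted_wrt (\<ge>) mu}"
proof (rule inj_onI, clarify)
  fix lam mu lam' mu'
  assume sorted: "sorted_wrt (\<ge>) lam" "sorted_wrt (\<ge>) mu" "sorted_wrt (\<ge>) lam'" "sorted_wrt (\<ge>) mu'"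
    and eq: "coloured_mset (lam, mu) = coloured_mset (lam', mu')"
  have "mset lam = mset lam'" "mset mu = mset mu'"
    using arg_cong[OF eq, of "colour_part 1"] arg_cong[OF eq, of "colour_part 0"]
    by (simp_all only: coloured_mset_simps)
  then show "lam = lam' \<and> mu = mu'"
    using sorted by (simp add: sorted_desc_list_eqI)
qed

lemma obtain_sorted_coloured_mset:
  assumes "set_mset M \<subseteq> UNIV \<times> {0, 1}"
  obtains lam mu where "sorted_wrt (\<ge>) lam" "sorted_wrt (\<ge>) mu" "coloured_mset (lam, mu) = M"
proof
  show "sorted_wrt (\<ge>) (rev (sorted_list_of_multiset (colour_part 1 M)))"
    "sorted_wrt (\<ge>) (rev (sorted_list_of_multiset (colour_part 0 M)))"
    by (simp_all add: sorted_wrt_rev)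
  show "coloured_mset (rev (sorted_list_of_multiset (colour_part 1 M)),
      rev (sorted_list_of_multiset (colour_part 0 M))) = M"
    using assms by (intro coloured_mset_colour_parts) simp_all
qed

lemma coloured_mset_in_filling_types_iff:
  assumes "sorted_wrt (\<ge>) lam" "sorted_wrt (\<ge>) mu" "l \<le> n"
  shows "coloured_mset (lam, mu) \<in> filling_types n k l \<longleftrightarrow>
    length lam = l \<and> length mu = n - l \<and> sorted_wrt (>) mu \<and> sum_list lam + sum_list mu = k"
  using assms set_coloured_mset[of lam mu]
  by (simp add: filling_types_def coloured_mset_simps(1-4) sorted_strict_desc_iff
      distinct_iff_count_le_1) auto

lemma card_filling_types:
  assumes "l \<le> n"
  shows "card (filling_types n k l) =
    card {(lam, mu). length lam = l \<and> sorted_wrt (\<ge>) lam \<and> length mu = n - l \<and> sorted_wrt (>) mu \<and>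
      sum_list lam + sum_list mu = k}"
proof -
  let ?T = "{(lam, mu). length lam = l \<and> sorted_wrt (\<ge>) lam \<and> length mu = n - l \<and> sorted_wrt (>) mu \<and>
      sum_list lam + sum_list mu = k}"
  have "?T \<subseteq> {(lam, mu). sorted_wrt (\<ge>) lam \<and> sorted_wrt (\<ge>) mu}"
    by (auto simp: sorted_strict_desc_iff)
  then have inj: "inj_on coloured_mset ?T"
    using inj_on_coloured_mset by (rule inj_on_subset[rotated])
  have "coloured_mset ` ?T = filling_types n k l"
  proof (intro equalityI subsetI)
    fix M assume "M \<in> coloured_mset ` ?T"
    then show "M \<in> filling_types n k l"
      using coloured_mset_in_filling_types_iff[OF _ _ assms] sorted_strict_desc_iff by auto
  next
    fix M assume M: "M \<in> filling_types n k l"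
    then have "set_mset M \<subseteq> UNIV \<times> {0, 1}"
      by (simp add: filling_types_def)
    then obtain lam mu where lam_mu: "sorted_wrt (\<ge>) lam" "sorted_wrt (\<ge>) mu" "coloured_mset (lam, mu) = M"
      by (rule obtain_sorted_coloured_mset)
    then have "(lam, mu) \<in> ?T"
      using coloured_mset_in_filling_types_iff[OF lam_mu(1,2) assms] M by simp
    then show "M \<in> coloured_mset ` ?T"
      using lam_mu(3)[symmetric] by (rule rev_image_eqI)
  qed
  then show ?thesis
    using card_image[OF inj] by simp
qed

lemma image_mset_in_filling_types_iff:
  assumes "finite A" "g \<in> A \<rightarrow>\<^sub>E UNIV \<times> {0, 1}"
  shows "image_mset g (mset_set A) \<in> filling_types (card A) k l \<longleftrightarrow>
    g \<in> fillings A k l \<and> inj_on g {x\<in>A. snd (g x) = 0}"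
proof -
  have sum_values: "sum_mset (image_mset f (image_mset g (mset_set A))) = (\<Sum>x\<in>A. f (g x))"
    for f :: "nat \<times> nat \<Rightarrow> nat"
    by (simp only: sum_unfold_sum_mset multiset.map_comp o_def)
  show ?thesis
    using assms by (auto simp: filling_types_def fillings_def sum_values
        inj_on_colour0_iff_count_le_1 PiE_iff)
qed

lemma image_mset_injective_fillings:
  assumes "finite A"
  shows "(\<lambda>g. image_mset g (mset_set A)) ` {g \<in> fillings A k l. inj_on g {x\<in>A. snd (g x) = 0}} =
    filling_types (card A) k l"
proof (intro equalityI subsetI)
  fix M assume "M \<in> (\<lambda>g. image_mset g (mset_set A)) ` {g \<in> fillings A k l. inj_on g {x\<in>A. snd (g x) = 0}}"
  then show "M \<in> filling_types (card A) k l"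
    using image_mset_in_filling_types_iff[OF assms] by (auto simp: fillings_def)
next
  fix M assume M: "M \<in> filling_types (card A) k l"
  then obtain g where g: "g \<in> A \<rightarrow>\<^sub>E set_mset M" "image_mset g (mset_set A) = M"
    using obtain_fun_with_image_mset[OF assms] by (auto simp: filling_types_def)
  then have "g \<in> A \<rightarrow>\<^sub>E UNIV \<times> {0, 1}"
    using M by (auto simp: filling_types_def PiE_iff)
  then show "M \<in> (\<lambda>g. image_mset g (mset_set A)) ` {g \<in> fillings A k l. inj_on g {x\<in>A. snd (g x) = 0}}"
    using image_mset_in_filling_types_iff[OF assms] M g(2) by blast
qed

section \<open>The signed moment\<close>

lemma perm_orbit_eq_orbit: "permutation \<sigma> \<Longrightarrow> perm_orbit \<sigma> x = orbit \<sigma> x"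
  by (simp add: perm_orbit_def orbit_altdef_permutation)

lemma cyc_count_eq_card_orbits:
  assumes "\<sigma> permutes {1..n}"
  shows "cyc_count n \<sigma> = (\<lambda>i. card {c \<in> orbit \<sigma> ` {1..n}. card c = i})"
proof -
  have "permutation \<sigma>"
    using assms permutation_permutes by blast
  then show ?thesis
    unfolding cyc_count_def perm_orbit_eq_orbit[OF \<open>permutation \<sigma>\<close>]
    by (intro ext arg_cong[where f = card]) auto
qed

lemma comp_permutes_in_PiE:
  assumes "g \<in> A \<rightarrow>\<^sub>E B" "\<tau> permutes A"
  shows "g \<circ> \<tau> \<in> A \<rightarrow>\<^sub>E B"
  using assms permutes_in_image[OF assms(2)] permutes_not_in[OF assms(2)]
  by (auto simp: PiE_iff extensional_def)

lemma injective_fillings_comp_permutes: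
  assumes "finite A" "g \<in> fillings A k l" "inj_on g {x\<in>A. snd (g x) = 0}" "\<tau> permutes A"
  shows "g \<circ> \<tau> \<in> fillings A k l \<and> inj_on (g \<circ> \<tau>) {x\<in>A. snd ((g \<circ> \<tau>) x) = 0}"
proof -
  have g: "g \<in> A \<rightarrow>\<^sub>E UNIV \<times> {0, 1}"
    using assms(2) by (simp add: fillings_def)
  have "image_mset (g \<circ> \<tau>) (mset_set A) = image_mset g (mset_set A)"
    using permutes_implies_image_mset_eq[OF assms(4), of "g \<circ> \<tau>" g] by simp
  then show ?thesis
    using assms(2,3) image_mset_in_filling_types_iff[OF assms(1) g]
      image_mset_in_filling_types_iff[OF assms(1) comp_permutes_in_PiE[OF g assms(4)]]
    by simp
qed

lemma sum_card_stabilizer_injective_fillings: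
  assumes "finite A"
  shows "(\<Sum>g\<in>{g \<in> fillings A k l. inj_on g {x\<in>A. snd (g x) = 0}}. card (stabilizer A g)) =
    fact (card A) * card (filling_types (card A) k l)"
proof -
  let ?F = "{g \<in> fillings A k l. inj_on g {x\<in>A. snd (g x) = 0}}"
  have "?F \<subseteq> extensional A"
    by (auto simp: fillings_def PiE_def)
  moreover have "finite ?F"
    using finite_fillings[OF assms, of k l] by simp
  ultimately have "(\<Sum>g\<in>?F. card (stabilizer A g)) =
      fact (card A) * card ((\<lambda>g. image_mset g (mset_set A)) ` ?F)"
    using injective_fillings_comp_permutes[OF assms] by (intro sum_card_stabilizer[OF assms]) auto
  then show ?thesis
    by (simp add: image_mset_injective_fillings[OF assms])
qed

lemma signed_moment_H_E:
  assumes "l \<le> n"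
  shows "signed_moment (\<lambda>X. H_poly k X * E_poly l X) n =
    real (card {(lam, mu). length lam = l \<and> sorted_wrt (\<ge>) lam \<and> length mu = n - l \<and>
      sorted_wrt (>) mu \<and> sum_list lam + sum_list mu = k})"
proof -
  let ?A = "{1..n}" and ?S = "{\<sigma>. \<sigma> permutes {1..n}}"
  let ?F = "{g \<in> fillings ?A k l. inj_on g {x\<in>?A. snd (g x) = 0}}"
  have "(\<Sum>\<sigma>\<in>?S. real_of_int (sign \<sigma>) * (H_poly k (cyc_count n \<sigma>) * E_poly l (cyc_count n \<sigma>))) =
      (\<Sum>\<sigma>\<in>?S. \<Sum>g\<in>{g \<in> fillings ?A k l. g \<circ> \<sigma> = g}. real_of_int (colour0_sign ?A \<sigma> g))"
    using sign_mult_H_E_eq_sum_colour0_sign cyc_count_eq_card_orbits by (intro sum.cong) auto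
  also have "\<dots> = (\<Sum>g\<in>fillings ?A k l. \<Sum>\<sigma>\<in>stabilizer ?A g. real_of_int (colour0_sign ?A \<sigma> g))"
    using sum.swap_restrict[OF finite_permutations[of ?A] finite_fillings[of ?A k l],
        where g = "\<lambda>\<sigma> g. real_of_int (colour0_sign ?A \<sigma> g)" and R = "\<lambda>\<sigma> g. g \<circ> \<sigma> = g"]
    by (simp add: stabilizer_def)
  also have "\<dots> = (\<Sum>g\<in>?F. real (card (stabilizer ?A g)))"
  proof -
    have "(\<Sum>\<sigma>\<in>stabilizer ?A g. real_of_int (colour0_sign ?A \<sigma> g)) =
        (if inj_on g {x\<in>?A. snd (g x) = 0} then real (card (stabilizer ?A g)) else 0)" for g
      unfolding of_int_sum[symmetric] sum_colour0_sign_stabilizer[OF finite_atLeastAtMost] by simp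
    then show ?thesis
      by (simp add: sum.inter_filter[OF finite_fillings] cong: if_cong)
  qed
  also have "\<dots> = fact n * real (card (filling_types n k l))"
    using arg_cong[OF sum_card_stabilizer_injective_fillings[of ?A k l], of real] by simp
  also have "\<dots> = fact n * real (card {(lam, mu). length lam = l \<and> sorted_wrt (\<ge>) lam \<and>
      length mu = n - l \<and> sorted_wrt (>) mu \<and> sum_list lam + sum_list mu = k})"
    using card_filling_types[OF assms] by simp
  finally show ?thesis
    by (simp add: signed_moment_def)
qed

theorem proposition3p8:
  fixes a b j n :: nat
  assumes "j \<le> b" and "b + 1 \<le> n"
  shows "signed_moment (\<lambda>X. H_poly (a + 1 + j) X * E_poly (b - j) X) n =
    real (card {(lam, mu). length lam = b - j \<and> sorted_wrt (\<ge>) lam \<and>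
                 length mu = n - b + j \<and> sorted_wrt (>) mu \<and>
                 sum_list lam + sum_list mu = a + 1 + j})"
proof -
  have "n - b + j = n - (b - j)"
    using assms by simp
  then show ?thesis
    using signed_moment_H_E[of "b - j" n "a + 1 + j"] assms by simp
qed

end
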